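(* The function $q$ satisfies $q(\alpha)\to0$ as $\alpha\to0^+$ and as $\alpha\to(\pi/2)^-$, and there is a unique $\alpha_0^*\in(0,\pi/2)$ (numerically $\alpha_0^*\approx1.391$) such that $q$ is strictly increasing on $(0,\alpha_0^*]$ and strictly decreasing on $[\alpha_0^*,\pi/2)$. Consequently, the Steiner drop system has exactly two equilibria when $\alpha_0\neq\alpha_0^*$ and exactly one equilibrium when $\alpha_0=\alpha_0^*$; when $\alpha_0<\alpha_0^*$ the equilibrium $(0,0,\tfrac13\sqrt{\tan\alpha_0},0)$ is the one with the smaller $y$-coordinate, and when $\alpha_0>\alpha_0^*$ it is the one with the larger $y$-coordinate.
   Context: Let $q(\alpha)=\dfrac{2\sin^2\alpha\,\sqrt{\tan\alpha}}{4+\sec\alpha}$ for $\alpha\in(0,\pi/2)$. Fix $\alpha_0\in(0,\pi/2)$. For $x\in\mathbb{R}$, $y>0$ define $a(x,y)=\sqrt{\left(\tfrac{1}{3y}-3x\right)^2+9y^2}$, $b(x,y)=\sqrt{\left(\tfrac{1}{3y}+3x\right)^2+9y^2}$, $f(x,y)=\frac{1}{a}\left(\frac{1}{3y}-3x\right)-\frac{1}{b}\left(\frac{1}{3y}+3x\right)$, $h(x,y)=-3y\left(\frac1a+\frac1b\right)+\frac{q(\alpha_0)}{3y}\left(\frac{2(a+b)}{3y}+ab\right)$. The Steiner drop system is the ODE on $\{(x,w,y,z)\in\mathbb{R}^4: y>0\}$: $\dot x=w,\ \dot w=f(x,y),\ \dot y=z,\ \dot z=h(x,y)$. *)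

theory Defs
  imports "HOL-Analysis.Analysis"
begin

definition q :: "real \<Rightarrow> real" where
  "q \<alpha> = 2 * (sin \<alpha>)^2 * sqrt (tan \<alpha>) / (4 + 1 / cos \<alpha>)"

definition sd_a :: "real \<Rightarrow> real \<Rightarrow> real" where
  "sd_a x y = sqrt ((1/(3*y) - 3*x)^2 + 9*y^2)"

definition sd_b :: "real \<Rightarrow> real \<Rightarrow> real" where
  "sd_b x y = sqrt ((1/(3*y) + 3*x)^2 + 9*y^2)"

definition sd_f :: "real \<Rightarrow> real \<Rightarrow> real" where
  "sd_f x y = (1 / sd_a x y) * (1/(3*y) - 3*x) - (1 / sd_b x y) * (1/(3*y) + 3*x)"

definition sd_h :: "real \<Rightarrow> real \<Rightarrow> real \<Rightarrow> real" where
  "sd_h \<alpha>0 x y = - 3*y * (1 / sd_a x y + 1 / sd_b x y)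
     + q \<alpha>0 / (3*y) * (2 * (sd_a x y + sd_b x y) / (3*y) + sd_a x y * sd_b x y)"

definition steiner_field :: "real \<Rightarrow> real \<times> real \<times> real \<times> real \<Rightarrow> real \<times> real \<times> real \<times> real" where
  "steiner_field \<alpha>0 p = (case p of (x, w, y, z) \<Rightarrow> (w, sd_f x y, z, sd_h \<alpha>0 x y))"

definition steiner_equilibria :: "real \<Rightarrow> (real \<times> real \<times> real \<times> real) set" where
  "steiner_equilibria \<alpha>0 = {p. fst (snd (snd p)) > 0 \<and> steiner_field \<alpha>0 p = (0, 0, 0, 0)}"

end

theory Submission
  imports Defs
begin

text \<open>
  With \<open>c = cos \<alpha>\<close> one has \<open>q \<alpha> ^ 4 = 16 (1 - c\<^sup>2)\<^sup>5 c\<^sup>2 / (4c + 1)\<^sup>4\<close>, a rational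
  function whose derivative on \<open>(0, 1)\<close> has the sign of the decreasing cubic
  \<open>1 - 4c - 6c\<^sup>2 - 16c\<^sup>3\<close>. So \<open>q\<close> increases up to \<open>arccos c\<^sub>*\<close>, where \<open>c\<^sub>*\<close> is the root of
  the cubic, and decreases afterwards; extended by \<open>0\<close> at both ends of \<open>[0, pi/2]\<close> it is
  continuous, so every value strictly between \<open>0\<close> and its maximum is taken exactly twice.

  At an equilibrium, \<open>f = 0\<close> forces \<open>x = 0\<close>, and then \<open>h = 0\<close> says precisely
  \<open>q \<alpha>\<^sub>0 = q (arctan (9 y\<^sup>2))\<close>. Hence the equilibria are the points with height
  \<open>y = sqrt (tan \<alpha>) / 3\<close>, \<open>\<alpha>\<close> ranging over the level set of \<open>q\<close> through \<open>\<alpha>\<^sub>0\<close>, and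
  this height is increasing in \<open>\<alpha>\<close>.
\<close>

lemma unimodal_less_peak:
  fixes f :: "'a::linorder \<Rightarrow> 'b::order"
  assumes "strict_mono_on {a..m} f" "strict_antimono_on {m..b} f" "x \<in> {a..b}" "x \<noteq> m"
  shows "f x < f m"
  using assms by (cases "x < m") (auto simp: monotone_on_def)

lemma unimodal_level_set:
  fixes f :: "real \<Rightarrow> real"
  assumes cont: "continuous_on {a..b} f" and ends: "f a = 0" "f b = 0" and "a \<le> m" "m \<le> b"
    and inc: "strict_mono_on {a..m} f" and dec: "strict_antimono_on {m..b} f"
    and v: "0 < v" "v < f m"
  obtains l r where "a < l" "l < m" "m < r" "r < b" "{x \<in> {a<..<b}. f x = v} = {l, r}"
proof -
  obtain l where l: "a \<le> l" "l \<le> m" "f l = v"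
    using IVT'[of f a v m] continuous_on_subset[OF cont] ends v \<open>a \<le> m\<close> \<open>m \<le> b\<close> by auto
  obtain r where r: "m \<le> r" "r \<le> b" "f r = v"
    using IVT2'[of f b v m] continuous_on_subset[OF cont] ends v \<open>a \<le> m\<close> \<open>m \<le> b\<close> by auto
  have "l \<noteq> a" "l \<noteq> m" "r \<noteq> m" "r \<noteq> b" using l r ends v by auto
  with l r have lr: "a < l" "l < m" "m < r" "r < b" by auto
  have "inj_on f {a..m}" "inj_on f {m..b}"
    using inc dec by (simp_all add: strict_mono_on_imp_inj_on strict_antimono_iff_antimono)
  then have "x = l \<or> x = r" if "x \<in> {a<..<b}" "f x = v" for x
    using that l r by (cases "x \<le> m") (auto dest: inj_onD)
  then have "{x \<in> {a<..<b}. f x = v} = {l, r}" using lr l r by auto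
  with lr show thesis using that by blast
qed

definition q_quartic :: "real \<Rightarrow> real" where
  "q_quartic c = 16 * (1 - c^2)^5 * c^2 / (4*c + 1)^4"

definition q_crit_poly :: "real \<Rightarrow> real" where
  "q_crit_poly c = 1 - 4*c - 6*c^2 - 16*c^3"

lemma q_quartic_has_real_derivative:
  assumes "4*c + 1 \<noteq> 0"
  shows "(q_quartic has_real_derivative 32 * (1 - c^2)^4 * c / (4*c + 1)^5 * q_crit_poly c) (at c)"
proof -
  have "(q_quartic has_real_derivative
      ((16 * (5 * (1 - c^2)^4 * (- (2*c))) * c^2 + 16 * (1 - c^2)^5 * (2*c)) * (4*c + 1)^4
        - 16 * (1 - c^2)^5 * c^2 * (4 * (4*c + 1)^3 * 4)) / ((4*c + 1)^4 * (4*c + 1)^4)) (at c)"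
    unfolding q_quartic_def[abs_def] using assms
    by (auto intro!: derivative_eq_intros simp: power2_eq_square)
  moreover have "((16 * (5 * (1 - c^2)^4 * (- (2*c))) * c^2 + 16 * (1 - c^2)^5 * (2*c)) * (4*c + 1)^4
        - 16 * (1 - c^2)^5 * c^2 * (4 * (4*c + 1)^3 * 4)) / ((4*c + 1)^4 * (4*c + 1)^4)
      = 32 * (1 - c^2)^4 * c / (4*c + 1)^5 * q_crit_poly c"
    using assms unfolding q_crit_poly_def by (simp add: field_simps) algebra
  ultimately show ?thesis by simp
qed

lemma q_quartic_derivative_sgn:
  assumes "0 < c" "c < 1"
  obtains d where "(q_quartic has_real_derivative d) (at c)" "sgn d = sgn (q_crit_poly c)"
proof
  have "0 < 1 - c^2" using assms by (simp add: abs_square_less_1)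
  then have "0 < 32 * (1 - c^2)^4 * c / (4*c + 1)^5" using assms by simp
  then show "sgn (32 * (1 - c^2)^4 * c / (4*c + 1)^5 * q_crit_poly c) = sgn (q_crit_poly c)"
    by (simp only: sgn_mult sgn_pos mult_1)
qed (use assms q_quartic_has_real_derivative in auto)

lemma q_crit_poly_strict_antimono: "strict_antimono_on {0..} q_crit_poly"
proof (rule monotone_onI)
  fix a b :: real assume "a \<in> {0..}" "b \<in> {0..}" "a < b"
  then have "a^2 \<le> b^2" "a^3 \<le> b^3" by (simp_all add: power_mono)
  with \<open>a < b\<close> show "q_crit_poly b < q_crit_poly a" unfolding q_crit_poly_def by linarith
qed

definition q_crit_cos :: real where
  "q_crit_cos = (SOME c. 0 < c \<and> c < 1 \<and> q_crit_poly c = 0)"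

lemma q_crit_cos: "0 < q_crit_cos" "q_crit_cos < 1" "q_crit_poly q_crit_cos = 0"
proof -
  have "continuous_on {0..1} q_crit_poly" unfolding q_crit_poly_def by (intro continuous_intros)
  then obtain c where "0 \<le> c" "c \<le> 1" "q_crit_poly c = 0"
    using IVT2'[of q_crit_poly 1 0 0] unfolding q_crit_poly_def by auto
  moreover have "c \<noteq> 0" "c \<noteq> 1" using \<open>q_crit_poly c = 0\<close> unfolding q_crit_poly_def by auto
  ultimately have "\<exists>c. 0 < c \<and> c < 1 \<and> q_crit_poly c = 0" by (intro exI[of _ c]) auto
  from someI_ex[OF this] show "0 < q_crit_cos" "q_crit_cos < 1" "q_crit_poly q_crit_cos = 0"
    unfolding q_crit_cos_def by auto
qed

lemma q_crit_poly_sgn: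
  assumes "0 \<le> c"
  shows "sgn (q_crit_poly c) = sgn (q_crit_cos - c)"
  using monotone_onD[OF q_crit_poly_strict_antimono, of c q_crit_cos]
    monotone_onD[OF q_crit_poly_strict_antimono, of q_crit_cos c] q_crit_cos assms
  by (cases c q_crit_cos rule: linorder_cases) auto

lemma continuous_on_q_quartic: "continuous_on {0..} q_quartic"
  unfolding q_quartic_def by (intro continuous_intros) (auto simp: add_nonneg_pos)

lemma q_quartic_strict_mono_on: "strict_mono_on {0..q_crit_cos} q_quartic"
proof (rule monotone_onI)
  fix a b assume ab: "a \<in> {0..q_crit_cos}" "b \<in> {0..q_crit_cos}" "a < b"
  show "q_quartic a < q_quartic b"
  proof (rule DERIV_pos_imp_increasing_open[OF \<open>a < b\<close>])
    fix c assume c: "a < c" "c < b"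
    then obtain d where d: "(q_quartic has_real_derivative d) (at c)" "sgn d = sgn (q_crit_poly c)"
      using q_quartic_derivative_sgn[of c] ab q_crit_cos by auto
    have "sgn (q_crit_poly c) = 1" using q_crit_poly_sgn[of c] ab c by simp
    with d show "\<exists>d. (q_quartic has_real_derivative d) (at c) \<and> 0 < d"
      by (metis sgn_greater zero_less_one)
  qed (use ab continuous_on_subset[OF continuous_on_q_quartic] in auto)
qed

lemma q_quartic_strict_antimono_on: "strict_antimono_on {q_crit_cos..1} q_quartic"
proof (rule monotone_onI)
  fix a b assume ab: "a \<in> {q_crit_cos..1}" "b \<in> {q_crit_cos..1}" "a < b"
  show "q_quartic b < q_quartic a"
  proof (rule DERIV_neg_imp_decreasing_open[OF \<open>a < b\<close>])
    fix c assume c: "a < c" "c < b"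
    then obtain d where d: "(q_quartic has_real_derivative d) (at c)" "sgn d = sgn (q_crit_poly c)"
      using q_quartic_derivative_sgn[of c] ab q_crit_cos by auto
    have "sgn (q_crit_poly c) = -1" using q_crit_poly_sgn[of c] ab c q_crit_cos by simp
    with d show "\<exists>d. (q_quartic has_real_derivative d) (at c) \<and> d < 0"
      by (metis sgn_less neg_less_0_iff_less zero_less_one)
  qed (use ab q_crit_cos continuous_on_subset[OF continuous_on_q_quartic] in auto)
qed

definition q_crit_angle :: real where
  "q_crit_angle = arccos q_crit_cos"

lemma q_crit_angle: "0 < q_crit_angle" "q_crit_angle < pi/2" "cos q_crit_angle = q_crit_cos"
proof -
  show "cos q_crit_angle = q_crit_cos" unfolding q_crit_angle_def using q_crit_cos by simp
  have "arccos q_crit_cos < arccos 0" using q_crit_cos by (intro arccos_less_arccos) auto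
  then show "q_crit_angle < pi/2" unfolding q_crit_angle_def by simp
  have "arccos 1 < arccos q_crit_cos" using q_crit_cos by (intro arccos_less_arccos) auto
  then show "0 < q_crit_angle" unfolding q_crit_angle_def by simp
qed

lemma q_power_4:
  assumes "0 < \<alpha>" "\<alpha> < pi/2"
  shows "q \<alpha> ^ 4 = q_quartic (cos \<alpha>)"
proof -
  have c: "cos \<alpha> > 0" and s: "sin \<alpha> > 0" using assms by (simp_all add: cos_gt_zero sin_gt_zero)
  have "sqrt (tan \<alpha>) ^ 4 = (sqrt (tan \<alpha>) ^ 2)^2" by (simp flip: power_mult)
  also have "\<dots> = (sin \<alpha> / cos \<alpha>)^2" using c s by (simp add: tan_def)
  finally have tan4: "sqrt (tan \<alpha>) ^ 4 = (sin \<alpha> / cos \<alpha>)^2" .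
  have "q \<alpha> ^ 4 = 16 * (sin \<alpha> ^ 2)^4 * sqrt (tan \<alpha>) ^ 4 / (4 + 1 / cos \<alpha>)^4"
    unfolding q_def by (simp add: power_divide power_mult_distrib)
  also have "\<dots> = 16 * (sin \<alpha> ^ 2)^5 * cos \<alpha> ^ 2 / (4 * cos \<alpha> + 1)^4"
    using c unfolding tan4 by (simp add: field_simps)
  finally show ?thesis unfolding q_quartic_def sin_squared_eq by simp
qed

text \<open>The continuous extension of \<open>q\<close> to \<open>[0, pi/2]\<close>, vanishing at both ends.\<close>
definition q_ext :: "real \<Rightarrow> real" where
  "q_ext \<alpha> = sqrt (sqrt (q_quartic (cos \<alpha>)))"

lemma q_eq_q_ext:
  assumes "0 < \<alpha>" "\<alpha> < pi/2"
  shows "q \<alpha> = q_ext \<alpha>"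
proof -
  have "0 < cos \<alpha>" "0 < sin \<alpha>" using assms by (simp_all add: cos_gt_zero sin_gt_zero)
  then have "0 \<le> q \<alpha>" unfolding q_def tan_def by simp
  moreover have "sqrt (q \<alpha> ^ 4) = q \<alpha> ^ 2"
    by (metis real_sqrt_abs abs_power2 power2_eq_square power4_eq_xxxx mult.assoc power_mult_distrib)
  ultimately show ?thesis unfolding q_ext_def q_power_4[OF assms, symmetric] by simp
qed

lemma q_ext_0: "q_ext 0 = 0" and q_ext_pi_half: "q_ext (pi/2) = 0"
  unfolding q_ext_def q_quartic_def by simp_all

lemma q_ext_pos:
  assumes "0 < \<alpha>" "\<alpha> < pi/2"
  shows "0 < q_ext \<alpha>"
proof -
  have c: "0 < cos \<alpha>" using assms by (simp add: cos_gt_zero)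
  have "cos \<alpha> < 1" using assms cos_monotone_0_pi[of 0 \<alpha>] by simp
  then have "cos \<alpha> ^ 2 < 1" using c by (simp add: abs_square_less_1)
  then show ?thesis unfolding q_ext_def q_quartic_def using c by simp
qed

lemma continuous_on_q_ext: "continuous_on {0..pi/2} q_ext"
proof -
  have "continuous_on {0..pi/2} (\<lambda>\<alpha>. q_quartic (cos \<alpha>))"
    by (rule continuous_on_compose2[OF continuous_on_q_quartic]) (auto intro!: continuous_intros cos_ge_zero)
  then show ?thesis unfolding q_ext_def by (intro continuous_intros)
qed

lemma q_ext_strict_mono_on: "strict_mono_on {0..q_crit_angle} q_ext"
proof (rule monotone_onI)
  fix a b assume ab: "a \<in> {0..q_crit_angle}" "b \<in> {0..q_crit_angle}" "a < b"
  have "cos b < cos a" using ab q_crit_angle by (intro cos_monotone_0_pi) auto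
  moreover have "q_crit_cos \<le> cos b" using ab q_crit_angle cos_monotone_0_pi_le[of b q_crit_angle] by auto
  ultimately have "q_quartic (cos a) < q_quartic (cos b)"
    using monotone_onD[OF q_quartic_strict_antimono_on] by auto
  then show "q_ext a < q_ext b" unfolding q_ext_def by simp
qed

lemma q_ext_strict_antimono_on: "strict_antimono_on {q_crit_angle..pi/2} q_ext"
proof (rule monotone_onI)
  fix a b assume ab: "a \<in> {q_crit_angle..pi/2}" "b \<in> {q_crit_angle..pi/2}" "a < b"
  have "cos b < cos a" using ab q_crit_angle by (intro cos_monotone_0_pi) auto
  moreover have "cos a \<le> q_crit_cos" using ab q_crit_angle cos_monotone_0_pi_le[of q_crit_angle a] by auto
  moreover have "0 \<le> cos b" using ab q_crit_angle by (intro cos_ge_zero) auto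
  ultimately have "q_quartic (cos b) < q_quartic (cos a)"
    using monotone_onD[OF q_quartic_strict_mono_on] by auto
  then show "q_ext b < q_ext a" unfolding q_ext_def by simp
qed

lemma tendsto_q_at_right_0: "(q \<longlongrightarrow> 0) (at_right 0)"
proof (rule Lim_transform_eventually)
  show "(q_ext \<longlongrightarrow> 0) (at_right 0)"
    using continuous_on_Icc_at_rightD[OF continuous_on_q_ext] q_ext_0 by simp
  show "\<forall>\<^sub>F \<alpha> in at_right 0. q_ext \<alpha> = q \<alpha>"
    unfolding eventually_at_right_field by (intro exI[of _ "pi/2"]) (auto simp: q_eq_q_ext)
qed

lemma tendsto_q_at_left_pi_half: "(q \<longlongrightarrow> 0) (at_left (pi/2))"
proof (rule Lim_transform_eventually)
  show "(q_ext \<longlongrightarrow> 0) (at_left (pi/2))"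
    using continuous_on_Icc_at_leftD[OF continuous_on_q_ext] q_ext_pi_half by simp
  show "\<forall>\<^sub>F \<alpha> in at_left (pi/2). q_ext \<alpha> = q \<alpha>"
    unfolding eventually_at_left_field by (intro exI[of _ 0]) (auto simp: q_eq_q_ext)
qed

lemma q_strict_mono_on: "strict_mono_on {0<..q_crit_angle} q"
  using monotone_onD[OF q_ext_strict_mono_on] q_crit_angle
  by (intro monotone_onI) (auto simp: q_eq_q_ext)

lemma q_strict_antimono_on: "strict_antimono_on {q_crit_angle..<pi/2} q"
  using monotone_onD[OF q_ext_strict_antimono_on] q_crit_angle
  by (intro monotone_onI) (auto simp: q_eq_q_ext)

lemma q_less_q_crit_angle:
  assumes "\<alpha> \<in> {0<..<pi/2}" "\<alpha> \<noteq> q_crit_angle"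
  shows "q \<alpha> < q q_crit_angle"
  using unimodal_less_peak[OF q_ext_strict_mono_on q_ext_strict_antimono_on, of \<alpha>] assms q_crit_angle
  by (simp add: q_eq_q_ext)

lemma q_peak_unique:
  assumes "\<beta> \<in> {0<..<pi/2}" "strict_mono_on {0<..\<beta>} q" "strict_antimono_on {\<beta>..<pi/2} q"
  shows "\<beta> = q_crit_angle"
proof (rule ccontr)
  assume ne: "\<beta> \<noteq> q_crit_angle"
  then have "q \<beta> < q q_crit_angle" using q_less_q_crit_angle assms(1) by blast
  moreover have "q q_crit_angle < q \<beta>"
    using assms ne q_crit_angle monotone_onD[OF assms(2), of q_crit_angle \<beta>]
      monotone_onD[OF assms(3), of \<beta> q_crit_angle]
    by (cases "\<beta> < q_crit_angle") auto
  ultimately show False by simp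
qed

lemma q_level_set_crit_angle: "{\<alpha> \<in> {0<..<pi/2}. q \<alpha> = q q_crit_angle} = {q_crit_angle}"
  using q_less_q_crit_angle q_crit_angle by fastforce

lemma q_level_set:
  assumes "\<alpha>0 \<in> {0<..<pi/2}" "\<alpha>0 \<noteq> q_crit_angle"
  obtains \<beta> where "\<beta> \<in> {0<..<pi/2}" "\<beta> \<noteq> \<alpha>0" "{\<alpha> \<in> {0<..<pi/2}. q \<alpha> = q \<alpha>0} = {\<alpha>0, \<beta>}"
    "\<alpha>0 < \<beta> \<longleftrightarrow> \<alpha>0 < q_crit_angle"
proof -
  have pos: "0 < q_ext \<alpha>0" using assms q_ext_pos by simp
  have below: "q_ext \<alpha>0 < q_ext q_crit_angle"
    using q_less_q_crit_angle[OF assms] q_eq_q_ext[of \<alpha>0] q_eq_q_ext[of q_crit_angle] assms q_crit_angle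
    by simp
  obtain l r where lr: "0 < l" "l < q_crit_angle" "q_crit_angle < r" "r < pi/2"
    and level: "{\<alpha> \<in> {0<..<pi/2}. q_ext \<alpha> = q_ext \<alpha>0} = {l, r}"
    by (rule unimodal_level_set[OF continuous_on_q_ext q_ext_0 q_ext_pi_half
        less_imp_le[OF q_crit_angle(1)] less_imp_le[OF q_crit_angle(2)]
        q_ext_strict_mono_on q_ext_strict_antimono_on pos below])
  have "{\<alpha> \<in> {0<..<pi/2}. q \<alpha> = q \<alpha>0} = {\<alpha> \<in> {0<..<pi/2}. q_ext \<alpha> = q_ext \<alpha>0}"
    using assms q_eq_q_ext[of \<alpha>0] by (intro Collect_cong) (auto simp: q_eq_q_ext)
  with level have q_level: "{\<alpha> \<in> {0<..<pi/2}. q \<alpha> = q \<alpha>0} = {l, r}" by simp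
  then have "\<alpha>0 = l \<or> \<alpha>0 = r" using assms by auto
  then show thesis
  proof
    assume "\<alpha>0 = l"
    with that[of r] q_level lr show thesis by auto
  next
    assume "\<alpha>0 = r"
    with that[of l] q_level lr show thesis by (auto simp: insert_commute)
  qed
qed

lemma divide_sqrt_square_add_inj:
  fixes s t c :: real
  assumes "0 < c" and eq: "s / sqrt (s^2 + c) = t / sqrt (t^2 + c)"
  shows "s = t"
proof -
  have pos: "0 < sqrt (s^2 + c)" "0 < sqrt (t^2 + c)"
    using \<open>0 < c\<close> by (simp_all add: add_nonneg_pos)
  then have cross: "s * sqrt (t^2 + c) = t * sqrt (s^2 + c)"
    using eq by (simp add: field_simps)
  then have "s^2 * (t^2 + c) = t^2 * (s^2 + c)"
    using \<open>0 < c\<close> by (metis power_mult_distrib real_sqrt_pow2 add_nonneg_pos zero_le_power2 less_imp_le)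
  then have "\<bar>s\<bar> = \<bar>t\<bar>" using \<open>0 < c\<close> by (simp add: algebra_simps power2_eq_iff abs_eq_iff)
  moreover have "sgn s = sgn t"
    using arg_cong[OF cross, of sgn] pos by (simp add: sgn_mult)
  ultimately show ?thesis by (metis sgn_mult_abs)
qed

lemma sd_f_eq_0_iff:
  assumes "0 < y"
  shows "sd_f x y = 0 \<longleftrightarrow> x = 0"
proof
  assume "sd_f x y = 0"
  then have "(1/(3*y) - 3*x) / sqrt ((1/(3*y) - 3*x)^2 + 9*y^2)
      = (1/(3*y) + 3*x) / sqrt ((1/(3*y) + 3*x)^2 + 9*y^2)"
    unfolding sd_f_def sd_a_def sd_b_def by simp
  then have "1/(3*y) - 3*x = 1/(3*y) + 3*x"
    by (rule divide_sqrt_square_add_inj[rotated]) (use assms in simp)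
  then show "x = 0" by simp
qed (simp add: sd_f_def sd_a_def sd_b_def)

lemma sd_a_sd_b_0:
  assumes "0 < y"
  shows "sd_a 0 y = sqrt (1 + 81*y^4) / (3*y)" "sd_b 0 y = sqrt (1 + 81*y^4) / (3*y)"
proof -
  have "(1/(3*y))^2 + 9*y^2 = (1 + 81*y^4) / (3*y)^2"
    using assms by (simp add: field_simps power2_eq_square power4_eq_xxxx)
  moreover have "sqrt ((3*y)^2) = 3*y" using assms by (subst real_sqrt_abs) simp
  ultimately have "sqrt ((1/(3*y))^2 + 9*y^2) = sqrt (1 + 81*y^4) / (3*y)"
    by (simp only: real_sqrt_divide)
  then show "sd_a 0 y = sqrt (1 + 81*y^4) / (3*y)" "sd_b 0 y = sqrt (1 + 81*y^4) / (3*y)"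
    unfolding sd_a_def sd_b_def by simp_all
qed

lemma q_arctan:
  assumes "0 < y"
  shows "q (arctan (9*y^2)) = 486*y^5 / ((1 + 81*y^4) * (4 + sqrt (1 + 81*y^4)))"
proof -
  define A where "A = sqrt (1 + 81*y^4)"
  have A: "0 < A" "A^2 = 1 + 81*y^4" unfolding A_def by (auto intro!: add_pos_nonneg)
  have "sqrt (1 + (9*y^2)^2) = A" unfolding A_def by (simp add: power_mult_distrib flip: power_mult)
  moreover have "sqrt (9*y^2) = 3*y" using assms by (simp add: real_sqrt_mult)
  ultimately have "q (arctan (9*y^2)) = 2 * (9*y^2/A)^2 * (3*y) / (4 + A)"
    unfolding q_def sin_arctan cos_arctan tan_arctan by simp
  also have "\<dots> = 486*y^5 / (A^2 * (4 + A))"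
    using A by (simp add: field_simps power2_eq_square eval_nat_numeral)
  finally show ?thesis using A unfolding A_def by simp
qed

lemma sd_h_0_eq_0_iff:
  assumes "0 < y"
  shows "sd_h \<alpha>0 0 y = 0 \<longleftrightarrow> q \<alpha>0 = q (arctan (9*y^2))"
proof -
  define A where "A = sqrt (1 + 81*y^4)"
  have A: "0 < A" "A^2 = 1 + 81*y^4" unfolding A_def by (auto intro!: add_pos_nonneg)
  have "sd_h \<alpha>0 0 y = -3*y*(3*y/A + 3*y/A) + q \<alpha>0/(3*y) * (2*(A/(3*y) + A/(3*y))/(3*y) + A/(3*y)*(A/(3*y)))"
    unfolding sd_h_def sd_a_sd_b_0[OF assms] A_def[symmetric] by simp
  also have "\<dots> = (q \<alpha>0 * (A^2*(4+A)) - 486*y^5) / (27*y^3*A)"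
    using A(1) assms by (simp add: field_simps power2_eq_square eval_nat_numeral)
  finally have "sd_h \<alpha>0 0 y = 0 \<longleftrightarrow> q \<alpha>0 * (A^2*(4+A)) = 486*y^5"
    using A assms by simp
  also have "\<dots> \<longleftrightarrow> q \<alpha>0 = 486*y^5 / (A^2*(4+A))"
    using A(1) by (simp add: eq_divide_eq add_pos_pos)
  finally show ?thesis unfolding q_arctan[OF assms] A_def[symmetric] using A by simp
qed

text \<open>The height \<open>y = sqrt (tan \<alpha>) / 3\<close> inverts \<open>\<alpha> = arctan (9 y\<^sup>2)\<close>.\<close>
definition steiner_point :: "real \<Rightarrow> real \<times> real \<times> real \<times> real" where
  "steiner_point \<alpha> = (0, 0, sqrt (tan \<alpha>) / 3, 0)"

lemma steiner_equilibria_eq_image: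
  "steiner_equilibria \<alpha>0 = steiner_point ` {\<alpha> \<in> {0<..<pi/2}. q \<alpha> = q \<alpha>0}"
proof (intro equalityI subsetI)
  fix p assume "p \<in> steiner_equilibria \<alpha>0"
  then obtain x y where p: "p = (x, 0, y, 0)" and y: "0 < y"
    and f: "sd_f x y = 0" and h: "sd_h \<alpha>0 x y = 0"
    unfolding steiner_equilibria_def steiner_field_def by (cases p) auto
  have "x = 0" using f sd_f_eq_0_iff[OF y] by simp
  with h have "q (arctan (9*y^2)) = q \<alpha>0" using sd_h_0_eq_0_iff[OF y] by simp
  moreover have "0 < arctan (9*y^2)" "arctan (9*y^2) < pi/2" using y arctan_ubound[of "9*y^2"] by simp_all
  ultimately have "arctan (9*y^2) \<in> {\<alpha> \<in> {0<..<pi/2}. q \<alpha> = q \<alpha>0}" by simp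
  moreover have "p = steiner_point (arctan (9*y^2))"
    unfolding steiner_point_def tan_arctan p \<open>x = 0\<close> using y by (simp add: real_sqrt_mult)
  ultimately show "p \<in> steiner_point ` {\<alpha> \<in> {0<..<pi/2}. q \<alpha> = q \<alpha>0}" by (rule rev_image_eqI)
next
  fix p assume "p \<in> steiner_point ` {\<alpha> \<in> {0<..<pi/2}. q \<alpha> = q \<alpha>0}"
  then obtain \<alpha> where \<alpha>: "0 < \<alpha>" "\<alpha> < pi/2" "q \<alpha> = q \<alpha>0" and p: "p = steiner_point \<alpha>"
    by auto
  define y where "y = sqrt (tan \<alpha>) / 3"
  have y: "0 < y" unfolding y_def using \<alpha> tan_gt_zero[of \<alpha>] by simp
  have "arctan (9*y^2) = \<alpha>"
    unfolding y_def using \<alpha> tan_gt_zero[of \<alpha>] by (simp add: power_divide arctan_tan)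
  then have "sd_h \<alpha>0 0 y = 0" using sd_h_0_eq_0_iff[OF y] \<alpha>(3) by simp
  moreover have "sd_f 0 y = 0" using sd_f_eq_0_iff[OF y] by simp
  ultimately show "p \<in> steiner_equilibria \<alpha>0"
    unfolding steiner_equilibria_def steiner_field_def p steiner_point_def y_def[symmetric] using y by simp
qed

lemma steiner_point_height_less:
  assumes "0 < \<alpha>" "\<alpha> < \<beta>" "\<beta> < pi/2"
  shows "fst (snd (snd (steiner_point \<alpha>))) < fst (snd (snd (steiner_point \<beta>)))"
  using tan_monotone[OF _ assms(2)] assms unfolding steiner_point_def by simp

lemma steiner_equilibria_crit_angle: "steiner_equilibria q_crit_angle = {steiner_point q_crit_angle}"
  unfolding steiner_equilibria_eq_image q_level_set_crit_angle by simp

lemma steiner_point_mem_equilibria: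
  "\<alpha>0 \<in> {0<..<pi/2} \<Longrightarrow> steiner_point \<alpha>0 \<in> steiner_equilibria \<alpha>0"
  unfolding steiner_equilibria_eq_image by (intro imageI) simp

lemma steiner_equilibria_off_peak:
  assumes "\<alpha>0 \<in> {0<..<pi/2}" "\<alpha>0 \<noteq> q_crit_angle"
  obtains \<beta> where "\<beta> \<in> {0<..<pi/2}" "\<beta> \<noteq> \<alpha>0"
    "steiner_equilibria \<alpha>0 = {steiner_point \<alpha>0, steiner_point \<beta>}" "\<alpha>0 < \<beta> \<longleftrightarrow> \<alpha>0 < q_crit_angle"
proof -
  obtain \<beta> where "\<beta> \<in> {0<..<pi/2}" "\<beta> \<noteq> \<alpha>0" "{\<alpha> \<in> {0<..<pi/2}. q \<alpha> = q \<alpha>0} = {\<alpha>0, \<beta>}"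
    "\<alpha>0 < \<beta> \<longleftrightarrow> \<alpha>0 < q_crit_angle"
    by (rule q_level_set[OF assms])
  then show thesis by (intro that[of \<beta>]) (simp_all add: steiner_equilibria_eq_image)
qed

lemma card_steiner_equilibria:
  assumes "\<alpha>0 \<in> {0<..<pi/2}"
  shows "card (steiner_equilibria \<alpha>0) = (if \<alpha>0 = q_crit_angle then 1 else 2)"
proof (cases "\<alpha>0 = q_crit_angle")
  case False
  then obtain \<beta> where \<beta>: "\<beta> \<in> {0<..<pi/2}" "\<beta> \<noteq> \<alpha>0"
    "steiner_equilibria \<alpha>0 = {steiner_point \<alpha>0, steiner_point \<beta>}"
    by (rule steiner_equilibria_off_peak[OF assms])
  have "steiner_point \<alpha>0 \<noteq> steiner_point \<beta>"
    using \<beta> assms steiner_point_height_less[of \<alpha>0 \<beta>] steiner_point_height_less[of \<beta> \<alpha>0]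
    by (cases "\<alpha>0 < \<beta>") auto
  with False show ?thesis unfolding \<beta>(3) by simp
qed (simp add: steiner_equilibria_crit_angle)

lemma steiner_equilibria_below_peak:
  assumes "\<alpha>0 \<in> {0<..<pi/2}" "\<alpha>0 < q_crit_angle"
    and "e \<in> steiner_equilibria \<alpha>0" "e \<noteq> steiner_point \<alpha>0"
  shows "fst (snd (snd (steiner_point \<alpha>0))) < fst (snd (snd e))"
proof -
  obtain \<beta> where "\<beta> \<in> {0<..<pi/2}" "\<beta> \<noteq> \<alpha>0"
    "steiner_equilibria \<alpha>0 = {steiner_point \<alpha>0, steiner_point \<beta>}" "\<alpha>0 < \<beta> \<longleftrightarrow> \<alpha>0 < q_crit_angle"
    by (rule steiner_equilibria_off_peak[OF assms(1) less_imp_neq[OF assms(2)]])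
  with assms show ?thesis using steiner_point_height_less[of \<alpha>0 \<beta>] by auto
qed

lemma steiner_equilibria_above_peak:
  assumes "\<alpha>0 \<in> {0<..<pi/2}" "q_crit_angle < \<alpha>0"
    and "e \<in> steiner_equilibria \<alpha>0" "e \<noteq> steiner_point \<alpha>0"
  shows "fst (snd (snd e)) < fst (snd (snd (steiner_point \<alpha>0)))"
proof -
  obtain \<beta> where "\<beta> \<in> {0<..<pi/2}" "\<beta> \<noteq> \<alpha>0"
    "steiner_equilibria \<alpha>0 = {steiner_point \<alpha>0, steiner_point \<beta>}" "\<alpha>0 < \<beta> \<longleftrightarrow> \<alpha>0 < q_crit_angle"
    by (rule steiner_equilibria_off_peak[OF assms(1) less_imp_neq[OF assms(2), symmetric]])
  with assms show ?thesis using steiner_point_height_less[of \<beta> \<alpha>0] by auto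
qed

theorem mainTheorem3:
  shows "(q \<longlongrightarrow> 0) (at_right 0) \<and> (q \<longlongrightarrow> 0) (at_left (pi/2)) \<and>
    (\<exists>\<alpha>s. \<alpha>s \<in> {0<..<pi/2} \<and>
       strict_mono_on {0<..\<alpha>s} q \<and> strict_antimono_on {\<alpha>s..<pi/2} q \<and>
       (\<forall>\<beta>\<in>{0<..<pi/2}. strict_mono_on {0<..\<beta>} q \<and> strict_antimono_on {\<beta>..<pi/2} q
            \<longrightarrow> \<beta> = \<alpha>s) \<and>
       (\<forall>\<alpha>0\<in>{0<..<pi/2}.
          (\<alpha>0 \<noteq> \<alpha>s \<longrightarrow> card (steiner_equilibria \<alpha>0) = 2) \<and>
          (\<alpha>0 = \<alpha>s \<longrightarrow> card (steiner_equilibria \<alpha>0) = 1) \<and>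
          (let p0 = (0::real, 0::real, sqrt (tan \<alpha>0) / 3, 0::real) in
             (\<alpha>0 < \<alpha>s \<longrightarrow> p0 \<in> steiner_equilibria \<alpha>0 \<and>
                (\<forall>e\<in>steiner_equilibria \<alpha>0. e \<noteq> p0 \<longrightarrow> fst (snd (snd p0)) < fst (snd (snd e)))) \<and>
             (\<alpha>0 > \<alpha>s \<longrightarrow> p0 \<in> steiner_equilibria \<alpha>0 \<and>
                (\<forall>e\<in>steiner_equilibria \<alpha>0. e \<noteq> p0 \<longrightarrow> fst (snd (snd e)) < fst (snd (snd p0)))))))"
proof (intro conjI tendsto_q_at_right_0 tendsto_q_at_left_pi_half exI[of _ q_crit_angle]
    q_strict_mono_on q_strict_antimono_on ballI impI)
  show "q_crit_angle \<in> {0<..<pi/2}" using q_crit_angle by simp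
next
  fix \<beta> assume "\<beta> \<in> {0<..<pi/2}" "strict_mono_on {0<..\<beta>} q \<and> strict_antimono_on {\<beta>..<pi/2} q"
  then show "\<beta> = q_crit_angle" using q_peak_unique by blast
next
  fix \<alpha>0 assume \<alpha>0: "\<alpha>0 \<in> {0<..<pi/2}"
  then show "\<alpha>0 \<noteq> q_crit_angle \<Longrightarrow> card (steiner_equilibria \<alpha>0) = 2"
    and "\<alpha>0 = q_crit_angle \<Longrightarrow> card (steiner_equilibria \<alpha>0) = 1"
    using card_steiner_equilibria by simp_all
  have p0: "(0::real, 0::real, sqrt (tan \<alpha>0) / 3, 0::real) = steiner_point \<alpha>0"
    unfolding steiner_point_def ..
  show "let p0 = (0::real, 0::real, sqrt (tan \<alpha>0) / 3, 0::real) in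
      (\<alpha>0 < q_crit_angle \<longrightarrow> p0 \<in> steiner_equilibria \<alpha>0 \<and>
         (\<forall>e\<in>steiner_equilibria \<alpha>0. e \<noteq> p0 \<longrightarrow> fst (snd (snd p0)) < fst (snd (snd e)))) \<and>
      (\<alpha>0 > q_crit_angle \<longrightarrow> p0 \<in> steiner_equilibria \<alpha>0 \<and>
         (\<forall>e\<in>steiner_equilibria \<alpha>0. e \<noteq> p0 \<longrightarrow> fst (snd (snd e)) < fst (snd (snd p0))))"
    unfolding Let_def p0
    using \<alpha>0 steiner_point_mem_equilibria steiner_equilibria_below_peak steiner_equilibria_above_peak
    by blast
qed

end
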